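(* Let $a\in\mathbb{H}$ have norm one, $\psi$ a linear isometry of $\mathbb{H}$, and $\varphi=T_{a,\bar a}\circ\sigma_{\mathbb{H}}$. Consider the conditions (i) $\varphi(\varphi(x)x)=\varphi(x)x$ for all $x$, (ii) $\varphi(\bar x\psi(x))=\bar x\psi(x)$ for all $x$, (iii) $\psi(\psi(y)\bar x+y\varphi(x))=\psi(y)\bar x+y\varphi(x)$ for all $x,y$. Then: (1) $(\varphi,\psi)$ satisfies (i) if and only if $a^2=\pm1$. (2) Assume $a^2=-1$. (a) For norm-one $b,c\in\mathrm{Im}(\mathbb{H})$, the pair $(\varphi,T_{b,c})$ satisfies (ii) and (iii) if and only if $c=\pm a$. (b) For norm-one $b\in\mathbb{H}$, neither $(\varphi,T_{b,b}\circ\sigma_{\mathbb{H}})$ nor $(\varphi,T_{b,-b}\circ\sigma_{\mathbb{H}})$ satisfies (ii).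
   Context: $T_{a,b}(x)=axb$ and $\sigma_{\mathbb{H}}(x)=\bar x$ on the quaternions $\mathbb{H}$; $\mathrm{Im}(\mathbb{H})$ is the space of pure quaternions. *)

theory Defs
  imports "HOL-Analysis.Analysis"
begin

datatype quat = Quat (Re: real) (Im1: real) (Im2: real) (Im3: real)

lemma quat_eqI [intro?]:
  "Re x = Re y \<Longrightarrow> Im1 x = Im1 y \<Longrightarrow> Im2 x = Im2 y \<Longrightarrow> Im3 x = Im3 y \<Longrightarrow> x = y"
  by (cases x, cases y) simp

lemma quat_eq_iff:
  "x = y \<longleftrightarrow> Re x = Re y \<and> Im1 x = Im1 y \<and> Im2 x = Im2 y \<and> Im3 x = Im3 y"
  by (auto intro: quat_eqI)

instantiation quat :: real_vector
begin
definition "0 = Quat 0 0 0 0"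
definition "x + y = Quat (Re x + Re y) (Im1 x + Im1 y) (Im2 x + Im2 y) (Im3 x + Im3 y)"
definition "- x = Quat (- Re x) (- Im1 x) (- Im2 x) (- Im3 x)"
definition "x - y = Quat (Re x - Re y) (Im1 x - Im1 y) (Im2 x - Im2 y) (Im3 x - Im3 y)"
definition "scaleR r x = Quat (r * Re x) (r * Im1 x) (r * Im2 x) (r * Im3 x)"
instance
  by standard (auto simp: quat_eq_iff zero_quat_def plus_quat_def uminus_quat_def
      minus_quat_def scaleR_quat_def algebra_simps)
end

instantiation quat :: real_algebra_1
begin
definition "1 = Quat 1 0 0 0"
text \<open>Hamilton product, with \<open>i j = k\<close>, \<open>j k = i\<close>, \<open>k i = j\<close>.\<close>
definition "x * y = Quat
   (Re x * Re y - Im1 x * Im1 y - Im2 x * Im2 y - Im3 x * Im3 y)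
   (Re x * Im1 y + Im1 x * Re y + Im2 x * Im3 y - Im3 x * Im2 y)
   (Re x * Im2 y - Im1 x * Im3 y + Im2 x * Re y + Im3 x * Im1 y)
   (Re x * Im3 y + Im1 x * Im2 y - Im2 x * Im1 y + Im3 x * Re y)"
instance
  by standard (auto simp: quat_eq_iff zero_quat_def plus_quat_def one_quat_def
      times_quat_def scaleR_quat_def algebra_simps)
end

instantiation quat :: real_inner
begin
definition "inner x y = Re x * Re y + Im1 x * Im1 y + Im2 x * Im2 y + Im3 x * Im3 y"
definition "norm (x::quat) = sqrt (inner x x)"
definition "sgn (x::quat) = scaleR (inverse (norm x)) x"
definition "dist (x::quat) y = norm (x - y)"
definition "uniformity = (INF e\<in>{0<..}. principal {(x::quat, y). dist x y < e})"
definition "open (U::quat set) \<longleftrightarrow> (\<forall>x\<in>U. \<forall>\<^sub>F (x', y) in uniformity. x' = x \<longrightarrow> y \<in> U)"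
instance
proof
  fix x y z :: quat and r :: real
  show "inner x y = inner y x" by (simp add: inner_quat_def algebra_simps)
  show "inner (x + y) z = inner x z + inner y z"
    by (simp add: inner_quat_def plus_quat_def algebra_simps)
  show "inner (scaleR r x) y = r * inner x y"
    by (simp add: inner_quat_def scaleR_quat_def algebra_simps)
  show "0 \<le> inner x x" by (simp add: inner_quat_def)
  show "inner x x = 0 \<longleftrightarrow> x = 0"
    by (simp add: inner_quat_def quat_eq_iff zero_quat_def add_nonneg_eq_0_iff)
  show "norm x = sqrt (inner x x)" by (rule norm_quat_def)
qed (simp_all add: sgn_quat_def dist_quat_def uniformity_quat_def open_quat_def)
end

definition qcnj :: "quat \<Rightarrow> quat" where
  "qcnj x = Quat (Re x) (- Im1 x) (- Im2 x) (- Im3 x)"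

definition pure_quats :: "quat set" where
  "pure_quats = {x. Re x = 0}"

definition T :: "quat \<Rightarrow> quat \<Rightarrow> quat \<Rightarrow> quat" where
  "T a b x = a * x * b"

definition linear_isometry :: "(quat \<Rightarrow> quat) \<Rightarrow> bool" where
  "linear_isometry \<psi> \<longleftrightarrow> linear \<psi> \<and> (\<forall>x. norm (\<psi> x) = norm x)"

definition cond_i :: "(quat \<Rightarrow> quat) \<Rightarrow> (quat \<Rightarrow> quat) \<Rightarrow> bool" where
  "cond_i \<phi> \<psi> \<longleftrightarrow> (\<forall>x. \<phi> (\<phi> x * x) = \<phi> x * x)"

definition cond_ii :: "(quat \<Rightarrow> quat) \<Rightarrow> (quat \<Rightarrow> quat) \<Rightarrow> bool" where
  "cond_ii \<phi> \<psi> \<longleftrightarrow> (\<forall>x. \<phi> (qcnj x * \<psi> x) = qcnj x * \<psi> x)"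

definition cond_iii :: "(quat \<Rightarrow> quat) \<Rightarrow> (quat \<Rightarrow> quat) \<Rightarrow> bool" where
  "cond_iii \<phi> \<psi> \<longleftrightarrow>
     (\<forall>x y. \<psi> (\<psi> y * qcnj x + y * \<phi> x) = \<psi> y * qcnj x + y * \<phi> x)"

end

theory Submission
  imports Defs
begin

text \<open>For (1): after cancelling, condition (i) at a unit \<open>x\<close> says that \<open>a\<^sup>2\<close> commutes with \<open>x\<close>;
  commuting with \<open>i\<close> and \<open>j\<close> forces \<open>a\<^sup>2\<close> to be real, hence \<open>\<plusminus>1\<close>, and conversely \<open>a\<^sup>2 = \<plusminus>1\<close>
  makes both sides of (i) equal.
  For (2a): condition (iii) at \<open>x = -c\<close> reads \<open>b y K = y L\<close> for all \<open>y\<close>, with \<open>K = a c a\<^sup>- c + 1\<close>;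
  comparing with \<open>y = 1\<close> gives \<open>(b y - y b) K = 0\<close>, and \<open>b\<close> is not central, so \<open>K = 0\<close>.
  Then \<open>a\<close> and \<open>c\<close> commute, and commuting pure unit quaternions agree up to sign.
  For (2b): at \<open>x = b (1 - a)\<close> one finds \<open>x\<^sup>- \<psi>(x) = \<plusminus>2a\<close>, while \<open>\<phi>(a) = -a\<close>.\<close>

lemma qcnj_qcnj [simp]: "qcnj (qcnj x) = x"
  by (simp add: quat_eq_iff qcnj_def)

lemma qcnj_one [simp]: "qcnj 1 = 1"
  by (simp add: quat_eq_iff qcnj_def one_quat_def)

lemma qcnj_minus [simp]: "qcnj (- x) = - qcnj x"
  by (simp add: quat_eq_iff qcnj_def uminus_quat_def)

lemma qcnj_add: "qcnj (x + y) = qcnj x + qcnj y"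
  by (simp add: quat_eq_iff qcnj_def plus_quat_def)

lemma qcnj_diff: "qcnj (x - y) = qcnj x - qcnj y"
  by (simp add: quat_eq_iff qcnj_def minus_quat_def)

lemma qcnj_scaleR: "qcnj (r *\<^sub>R x) = r *\<^sub>R qcnj x"
  by (simp add: quat_eq_iff qcnj_def scaleR_quat_def)

lemma qcnj_mult: "qcnj (x * y) = qcnj y * qcnj x"
  by (simp add: quat_eq_iff qcnj_def times_quat_def algebra_simps)

lemma mult_qcnj_self: "x * qcnj x = (norm x)\<^sup>2 *\<^sub>R 1"
  by (simp add: quat_eq_iff qcnj_def times_quat_def scaleR_quat_def one_quat_def
      inner_quat_def algebra_simps flip: dot_square_norm)

lemma qcnj_mult_self: "qcnj x * x = (norm x)\<^sup>2 *\<^sub>R 1"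
  using mult_qcnj_self [of "qcnj x"]
  by (simp add: norm_quat_def inner_quat_def qcnj_def)

lemma unit_mult_qcnj: "norm x = 1 \<Longrightarrow> x * qcnj x = 1"
  by (simp add: mult_qcnj_self)

lemma unit_qcnj_mult: "norm x = 1 \<Longrightarrow> qcnj x * x = 1"
  by (simp add: qcnj_mult_self)

lemma norm_quat_mult: "norm (x * y) = norm x * norm (y :: quat)"
proof -
  have "(norm (x * y))\<^sup>2 *\<^sub>R (1 :: quat) = x * (y * qcnj y) * qcnj x"
    by (simp add: mult_qcnj_self [symmetric] qcnj_mult mult.assoc)
  also have "\<dots> = (norm x * norm y)\<^sup>2 *\<^sub>R 1"
    by (simp add: mult_qcnj_self power_mult_distrib mult.commute)
  finally have "(norm (x * y))\<^sup>2 = (norm x * norm y)\<^sup>2"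
    by (simp add: scaleR_cancel_right)
  then show ?thesis
    by (simp add: power2_eq_iff_nonneg)
qed

lemma quat_mult_eq_0_iff: "x * y = 0 \<longleftrightarrow> x = 0 \<or> y = (0 :: quat)"
  by (metis norm_eq_zero norm_quat_mult mult_eq_0_iff mult_zero_left mult_zero_right)

lemma unit_square_eq_one_imp_qcnj: "norm a = 1 \<Longrightarrow> a * a = 1 \<Longrightarrow> qcnj a = a"
  by (metis mult.assoc mult_1_left mult_1_right unit_qcnj_mult)

lemma unit_square_eq_minus_one_imp_qcnj: "norm a = 1 \<Longrightarrow> a * a = -1 \<Longrightarrow> qcnj a = - a"
  by (metis mult.assoc mult_1_left mult_minus1_right minus_minus unit_qcnj_mult)

lemma qcnj_pure: "b \<in> pure_quats \<Longrightarrow> qcnj b = - b"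
  by (simp add: pure_quats_def quat_eq_iff qcnj_def uminus_quat_def)

lemma pure_unit_square: "b \<in> pure_quats \<Longrightarrow> norm b = 1 \<Longrightarrow> b * b = -1"
  using unit_mult_qcnj [of b] qcnj_pure [of b] by (simp add: minus_equation_iff)

lemma commute_i_j_imp_real:
  assumes "w * Quat 0 1 0 0 = Quat 0 1 0 0 * w" and "w * Quat 0 0 1 0 = Quat 0 0 1 0 * w"
  shows "w = of_real (Re w)"
  using assms by (simp add: quat_eq_iff times_quat_def of_real_def scaleR_quat_def one_quat_def)

lemma pure_nonzero_not_central:
  assumes "b \<in> pure_quats" and "b \<noteq> 0"
  obtains y where "b * y \<noteq> y * b"
proof -
  have "b \<noteq> of_real (Re b)"
    using assms by (simp add: pure_quats_def)
  with commute_i_j_imp_real show ?thesis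
    using that by blast
qed

lemma commuting_pure_mult_real:
  assumes "p \<in> pure_quats" and "q \<in> pure_quats" and "p * q = q * p"
  shows "p * q = of_real (Re (p * q))"
  using assms
  by (simp add: quat_eq_iff pure_quats_def times_quat_def of_real_def scaleR_quat_def
      one_quat_def algebra_simps)

lemma commuting_pure_units:
  assumes "p \<in> pure_quats" "q \<in> pure_quats" "norm p = 1" "norm q = 1" and "p * q = q * p"
  shows "q = p \<or> q = - p"
proof -
  obtain r where pq: "p * q = of_real r"
    using commuting_pure_mult_real [OF assms(1,2,5)] by blast
  have "q = - (p * (p * q))"
    using pure_unit_square [OF assms(1,3)] by (simp flip: mult.assoc)
  also have "\<dots> = - (r *\<^sub>R p)"
    by (simp add: pq of_real_def)
  finally have q: "q = - (r *\<^sub>R p)" .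
  then have "\<bar>r\<bar> = 1"
    using assms(3,4) by simp
  then have "r = 1 \<or> r = -1"
    by arith
  then show ?thesis
    using q by auto
qed

lemma cond_i_imp_square_commutes:
  assumes "norm a = 1" "norm x = 1" and "cond_i (T a (qcnj a) \<circ> qcnj) \<psi>"
  shows "a * a * x = x * (a * a)"
proof -
  have al: "qcnj a * (a * z) = z" and ar: "a * (qcnj a * z) = z"
    and xr: "x * (qcnj x * z) = z" for z
    using unit_qcnj_mult [OF assms(1)] unit_mult_qcnj [OF assms(1)] unit_mult_qcnj [OF assms(2)]
    by (simp_all flip: mult.assoc)
  have "a * qcnj x * a * x * qcnj a * qcnj a = a * qcnj x * qcnj a * x"
    using assms(3) by (simp add: cond_i_def T_def qcnj_mult mult.assoc)
  then have "a * (x * qcnj a * (a * qcnj x * a * x * qcnj a * qcnj a))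
      = a * (x * qcnj a * (a * qcnj x * qcnj a * x))"
    by simp
  then have "a * a * x * (qcnj a * qcnj a) = x"
    by (simp add: mult.assoc al ar xr)
  then have "a * a * x * (qcnj a * qcnj a) * (a * a) = x * (a * a)"
    by simp
  then show ?thesis
    by (simp add: mult.assoc al unit_qcnj_mult [OF assms(1)])
qed

lemma cond_i_iff_square_pm_one:
  assumes "norm a = 1"
  shows "cond_i (T a (qcnj a) \<circ> qcnj) \<psi> \<longleftrightarrow> a * a = 1 \<or> a * a = -1"
proof
  assume ci: "cond_i (T a (qcnj a) \<circ> qcnj) \<psi>"
  define w where "w = a * a"
  have "w * Quat 0 1 0 0 = Quat 0 1 0 0 * w" "w * Quat 0 0 1 0 = Quat 0 0 1 0 * w"
    unfolding w_def
    by (rule cond_i_imp_square_commutes [OF assms _ ci], simp add: norm_quat_def inner_quat_def)+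
  then have w: "w = of_real (Re w)"
    by (rule commute_i_j_imp_real)
  have "norm w = 1"
    using assms by (simp add: w_def norm_quat_mult)
  then have "\<bar>Re w\<bar> = 1"
    by (subst (asm) w) (simp add: of_real_def norm_quat_def inner_quat_def one_quat_def scaleR_quat_def)
  then have "Re w = 1 \<or> Re w = -1"
    by arith
  then show "a * a = 1 \<or> a * a = -1"
    using w by (auto simp: w_def)
next
  assume "a * a = 1 \<or> a * a = -1"
  then show "cond_i (T a (qcnj a) \<circ> qcnj) \<psi>"
  proof
    assume aa: "a * a = 1"
    have "a * (a * z) = z" for z
      using aa by (simp flip: mult.assoc)
    then show ?thesis
      using unit_square_eq_one_imp_qcnj [OF assms aa]
      by (simp add: cond_i_def T_def qcnj_mult mult.assoc aa)
  next
    assume aa: "a * a = -1"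
    have "a * (a * z) = - z" for z
      using aa by (simp flip: mult.assoc)
    then show ?thesis
      using unit_square_eq_minus_one_imp_qcnj [OF assms aa]
      by (simp add: cond_i_def T_def qcnj_mult mult.assoc aa)
  qed
qed

lemma cond_iii_imp_commute:
  assumes "norm a = 1" "a * a = -1"
    and "b \<in> pure_quats" "c \<in> pure_quats" "norm b = 1" "norm c = 1"
    and "cond_iii (T a (qcnj a) \<circ> qcnj) (T b c)"
  shows "a * c = c * a"
proof -
  have ca: "qcnj a = - a"
    using unit_square_eq_minus_one_imp_qcnj [OF assms(1,2)] .
  have cc: "c * c = -1"
    using pure_unit_square [OF assms(4,6)] .
  have bb: "b * (b * z) = - z" and cc': "c * (c * z) = - z" for z
    using pure_unit_square [OF assms(3,5)] cc by (simp_all flip: mult.assoc)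
  define K where "K = a * c * qcnj a * c + 1"
  have E: "b * y * K = y * (a * c * qcnj a - c)" for y
  proof -
    have "T b c (T b c y * qcnj (- c) + y * (T a (qcnj a) \<circ> qcnj) (- c))
        = T b c y * qcnj (- c) + y * (T a (qcnj a) \<circ> qcnj) (- c)"
      using assms(7) unfolding cond_iii_def by blast
    then show ?thesis
      unfolding K_def
      by (simp add: T_def qcnj_pure [OF assms(4)] ca mult.assoc bb cc cc' algebra_simps)
  qed
  have "b \<noteq> 0"
    using assms(5) by auto
  then obtain y where y: "b * y \<noteq> y * b"
    using pure_nonzero_not_central [OF assms(3)] by blast
  have "b * y * K = y * (b * K)"
    using E [of y] E [of 1] by simp
  then have "(b * y - y * b) * K = 0"
    by (simp add: left_diff_distrib mult.assoc)
  then have "K = 0"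
    using y by (simp add: quat_mult_eq_0_iff)
  then have "a * c * qcnj a * c = -1"
    by (simp add: K_def eq_neg_iff_add_eq_0)
  then have "a * c * qcnj a * c * c = - c"
    by simp
  then have "a * c * qcnj a = c"
    by (simp add: mult.assoc cc)
  then have "a * c * qcnj a * a = c * a"
    by simp
  then show ?thesis
    using unit_qcnj_mult [OF assms(1)] by (simp add: mult.assoc)
qed

lemma cond_ii_iii_iff:
  assumes "norm a = 1" "a * a = -1"
    and "b \<in> pure_quats" "c \<in> pure_quats" "norm b = 1" "norm c = 1"
  shows "cond_ii (T a (qcnj a) \<circ> qcnj) (T b c) \<and> cond_iii (T a (qcnj a) \<circ> qcnj) (T b c)
    \<longleftrightarrow> c = a \<or> c = - a"
proof
  assume "cond_ii (T a (qcnj a) \<circ> qcnj) (T b c) \<and> cond_iii (T a (qcnj a) \<circ> qcnj) (T b c)"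
  then have "a * c = c * a"
    using cond_iii_imp_commute [OF assms] by blast
  moreover have "a \<in> pure_quats"
    using unit_square_eq_minus_one_imp_qcnj [OF assms(1,2)]
    by (simp add: pure_quats_def quat_eq_iff qcnj_def uminus_quat_def)
  ultimately show "c = a \<or> c = - a"
    using commuting_pure_units assms by blast
next
  have aa: "a * (a * z) = - z" and bb: "b * (b * z) = - z" for z
    using assms(2) pure_unit_square [OF assms(3,5)] by (simp_all flip: mult.assoc)
  assume "c = a \<or> c = - a"
  then show "cond_ii (T a (qcnj a) \<circ> qcnj) (T b c) \<and> cond_iii (T a (qcnj a) \<circ> qcnj) (T b c)"
    using unit_square_eq_minus_one_imp_qcnj [OF assms(1,2)] qcnj_pure [OF assms(3)]
      pure_unit_square [OF assms(3,5)] assms(2)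
    by (auto simp: cond_ii_def cond_iii_def T_def qcnj_mult qcnj_add mult.assoc aa bb
        distrib_left distrib_right left_diff_distrib right_diff_distrib)
qed

lemma not_cond_ii_sandwich_qcnj:
  assumes "norm a = 1" "a * a = -1" "norm b = 1" and s: "s = 1 \<or> s = -1"
  shows "\<not> cond_ii (T a (qcnj a) \<circ> qcnj) (T b (s *\<^sub>R b) \<circ> qcnj)"
proof
  have ca: "qcnj a = - a"
    using unit_square_eq_minus_one_imp_qcnj [OF assms(1,2)] .
  define x where "x = b * (1 - a)"
  have qx: "qcnj x = (1 + a) * qcnj b"
    by (simp add: x_def qcnj_mult qcnj_diff ca)
  have bl: "qcnj b * (b * z) = z" for z
    using unit_qcnj_mult [OF assms(3)] by (simp flip: mult.assoc)
  have "(T b (s *\<^sub>R b) \<circ> qcnj) x = s *\<^sub>R (b * (1 + a))"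
    by (simp add: T_def qx mult.assoc unit_qcnj_mult [OF assms(3)])
  then have "qcnj x * (T b (s *\<^sub>R b) \<circ> qcnj) x = s *\<^sub>R ((1 + a) * (1 + a))"
    by (simp add: qx mult.assoc bl)
  also have "\<dots> = s *\<^sub>R (2 *\<^sub>R a)"
    using assms(2) by (simp add: algebra_simps scaleR_2)
  also have "\<dots> = (2 * s) *\<^sub>R a"
    by (simp add: mult.commute)
  finally have x: "qcnj x * (T b (s *\<^sub>R b) \<circ> qcnj) x = (2 * s) *\<^sub>R a" .
  have \<phi>: "(T a (qcnj a) \<circ> qcnj) (r *\<^sub>R a) = - (r *\<^sub>R a)" for r
    using assms(2) by (simp add: T_def ca qcnj_scaleR)
  assume "cond_ii (T a (qcnj a) \<circ> qcnj) (T b (s *\<^sub>R b) \<circ> qcnj)"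
  then have "- ((2 * s) *\<^sub>R a) = (2 * s) *\<^sub>R a"
    unfolding cond_ii_def by (metis x \<phi>)
  then have "(2 * s) *\<^sub>R a + (2 * s) *\<^sub>R a = 0"
    by (metis add.right_inverse)
  then show False
    using assms(1) s by (auto simp flip: scaleR_add_left)
qed

theorem lemma12:
  fixes a :: quat and \<psi> :: "quat \<Rightarrow> quat"
  assumes "norm a = 1"
    and "linear_isometry \<psi>"
  defines "\<phi> \<equiv> T a (qcnj a) \<circ> qcnj"
  shows "(cond_i \<phi> \<psi> \<longleftrightarrow> (a * a = 1 \<or> a * a = -1))
    \<and> (a * a = -1 \<longrightarrow>
        (\<forall>b c. b \<in> pure_quats \<and> c \<in> pure_quats \<and> norm b = 1 \<and> norm c = 1 \<longrightarrow>
           ((cond_ii \<phi> (T b c) \<and> cond_iii \<phi> (T b c)) \<longleftrightarrow> (c = a \<or> c = - a)))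
      \<and> (\<forall>b. norm b = 1 \<longrightarrow>
           \<not> cond_ii \<phi> (T b b \<circ> qcnj) \<and> \<not> cond_ii \<phi> (T b (- b) \<circ> qcnj)))"
  unfolding \<phi>_def
  using cond_i_iff_square_pm_one [OF assms(1)] cond_ii_iii_iff [OF assms(1)]
    not_cond_ii_sandwich_qcnj [OF assms(1), where s = 1]
    not_cond_ii_sandwich_qcnj [OF assms(1), where s = "-1"]
  by simp
end
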